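(* Let $\psi\in\mathcal K$ have radius of convergence $R_\psi>0$ and Khinchin family $(Y_t)$, and let $g(z)=\sum_{n\ge1}A_nz^n$ be the solution of Lagrange's equation $g(z)=z\psi(g(z))$. For $t\in(0,R_\psi)$ let $q(t)$ be the extinction probability of the Bienaymé–Galton–Watson process with offspring distribution $Y_t$. Then $$q(t)=\sum_{n=1}^\infty\frac{A_nt^{n-1}}{\psi(t)^n}=\frac{g(t/\psi(t))}{t}\qquad\text{for every }t\in(0,R_\psi).$$
   Context: $\mathcal K$ is the class of non-constant power series $f(z)=\sum_{n\ge0}a_nz^n$ with positive radius of convergence $R$, non-negative coefficients and $a_0>0$; its Khinchin family $(X_t)_{t\in[0,R)}$ is given by $\mathbf P(X_t=n)=a_nt^n/f(t)$ for $n\ge0$, $t\in(0,R)$. The solution $g$ of Lagrange's equation with data $\psi$ is the unique power series satisfying $g(z)=z\psi(g(z))$; its coefficients are non-negative, $A_0=0$. (When $t/\psi(t)$ equals the radius of convergence of $g$, $g(t/\psi(t))$ denotes the value of the convergent series there.) The extinction probability is the probability that the Galton–Watson tree is finite. *)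

theory Defs
  imports "HOL-Probability.Probability" "HOL-Computational_Algebra.Formal_Power_Series"
begin

definition pseries :: "(nat \<Rightarrow> real) \<Rightarrow> real \<Rightarrow> real" where
  "pseries a x = (\<Sum>n. a n * x ^ n)"

definition class_K :: "(nat \<Rightarrow> real) \<Rightarrow> bool" where
  "class_K a \<longleftrightarrow> (\<forall>n. a n \<ge> 0) \<and> a 0 > 0 \<and> (\<exists>n>0. a n \<noteq> 0)
      \<and> conv_radius a > 0"

definition khinchin :: "(nat \<Rightarrow> real) \<Rightarrow> real \<Rightarrow> nat pmf" where
  "khinchin a t = embed_pmf (\<lambda>n. a n * t ^ n / pseries a t)"

fun iid_sum :: "nat pmf \<Rightarrow> nat \<Rightarrow> nat pmf" where
  "iid_sum p 0 = return_pmf 0"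
| "iid_sum p (Suc k) = bind_pmf p (\<lambda>x. map_pmf (\<lambda>y. x + y) (iid_sum p k))"

text \<open>Law of the generation size Z_n of the Bienayme-Galton-Watson process with
offspring law p, started from one individual: Z_0 = 1 and Z_(n+1) is a sum of
Z_n independent copies of the offspring variable.\<close>

fun gw_generation :: "nat pmf \<Rightarrow> nat \<Rightarrow> nat pmf" where
  "gw_generation p 0 = return_pmf 1"
| "gw_generation p (Suc n) = bind_pmf (gw_generation p n) (iid_sum p)"

text \<open>Extinction probability: the tree is finite iff Z_n = 0 for some n; these
events increase in n, so the probability is the limit of P(Z_n = 0).\<close>

definition extinction_prob :: "nat pmf \<Rightarrow> real" where
  "extinction_prob p = lim (\<lambda>n. pmf (gw_generation p n) 0)"

definition lagrange_sol :: "(nat \<Rightarrow> real) \<Rightarrow> real fps" where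
  "lagrange_sol psi = (THE G. fps_nth G 0 = 0 \<and> G = fps_X * fps_compose (Abs_fps psi) G)"

end

theory Submission
  imports Defs "HOL-Analysis.FPS_Convergence"
begin

(* The offspring law Y_t has generating function f(s) = psi(t s) / psi(t) and P(Z_n = 0) = f^n(0),
   so the extinction probability q is the least fixed point of f in [0,1]; equivalently, with
   w = t / psi(t), t q is the least non-negative solution of u = w psi(u).
   The Lagrange series g(w) = sum A_n w^n has non-negative terms.  Since only A_0, ..., A_n enter
   the first n + 1 coefficients of X psi(g), its partial sums satisfy
   s_(n+1) <= w psi(s_n) <= g(w).  The first inequality keeps every s_n below t q, so g(w)
   converges to at most t q, and letting n tend to infinity shows that g(w) solves
   u = w psi(u); minimality of t q gives g(w) = t q. *)

unbundle no vec_syntax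
unbundle fps_syntax

section \<open>Power series with non-negative coefficients\<close>

lemma pseries_eq_eval_fps: "pseries a = eval_fps (Abs_fps a)"
  by (simp add: fun_eq_iff pseries_def eval_fps_def)

lemma pseries_sums:
  assumes "ereal \<bar>x\<bar> < conv_radius a"
  shows "(\<lambda>n. a n * x ^ n) sums pseries a x"
  unfolding pseries_def using assms by (intro summable_sums summable_in_conv_radius) simp

lemma pseries_mono:
  assumes "\<And>n. 0 \<le> a n" "0 \<le> x" "x \<le> y" "ereal y < conv_radius a"
  shows "pseries a x \<le> pseries a y"
proof (rule sums_le[OF _ pseries_sums pseries_sums])
  show "a n * x ^ n \<le> a n * y ^ n" for n
    using assms by (simp add: mult_left_mono power_mono)
qed (use assms in \<open>auto intro: le_less_trans[of _ "ereal y"]\<close>)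

lemma pseries_ge_nth_0:
  assumes "\<And>n. 0 \<le> a n" "0 \<le> x" "ereal x < conv_radius a"
  shows "a 0 \<le> pseries a x"
  using pseries_mono[OF assms(1) order_refl assms(2,3)] by (simp add: pseries_def)

lemma isCont_pseries:
  assumes "ereal \<bar>x\<bar> < conv_radius a"
  shows "isCont (pseries a) x"
proof -
  have "x \<in> eball 0 (fps_conv_radius (Abs_fps a))"
    using assms by (simp add: fps_conv_radius_def)
  then show ?thesis
    unfolding pseries_eq_eval_fps
    using continuous_on_eval_fps continuous_on_eq_continuous_at open_eball by blast
qed

lemma class_K_pseries_pos:
  assumes "class_K a" "0 \<le> x" "ereal x < conv_radius a"
  shows "0 < pseries a x"
  using assms pseries_ge_nth_0[of a x] unfolding class_K_def by fastforce

section \<open>Generating functions and the extinction probability\<close>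

lemma pmf_khinchin:
  assumes "class_K a" "0 \<le> t" "ereal t < conv_radius a"
  shows "pmf (khinchin a t) n = a n * t ^ n / pseries a t"
proof -
  have nonneg: "\<And>n. 0 \<le> a n" using assms(1) by (simp add: class_K_def)
  have pos: "0 < pseries a t" using class_K_pseries_pos assms by blast
  have "(\<lambda>n. a n * t ^ n / pseries a t) sums 1"
    using sums_divide[OF pseries_sums, of t a "pseries a t"] assms pos by simp
  moreover have terms_nonneg: "0 \<le> a n * t ^ n / pseries a t" for n
    using nonneg assms pos by simp
  ultimately have "(\<integral>\<^sup>+n. ennreal (a n * t ^ n / pseries a t) \<partial>count_space UNIV) = 1"
    by (simp add: nn_integral_count_space_nat suminf_ennreal2 sums_iff)
  then show ?thesis
    unfolding khinchin_def by (subst pmf_embed_pmf) (use terms_nonneg in auto)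
qed

lemma nn_integral_khinchin_power:
  assumes "class_K a" "0 \<le> t" "ereal t < conv_radius a" "0 \<le> s" "s \<le> 1"
  shows "(\<integral>\<^sup>+n. ennreal (s ^ n) \<partial>measure_pmf (khinchin a t))
      = ennreal (pseries a (t * s) / pseries a t)"
proof -
  have nonneg: "\<And>n. 0 \<le> a n" using assms(1) by (simp add: class_K_def)
  have pos: "0 < pseries a t" using class_K_pseries_pos assms by blast
  have "ereal \<bar>t * s\<bar> < conv_radius a"
    using assms by (intro le_less_trans[OF _ assms(3)]) (simp add: mult_left_le abs_mult)
  from sums_divide[OF pseries_sums[OF this], of "pseries a t"]
  have "(\<lambda>n. a n * t ^ n / pseries a t * s ^ n) sums (pseries a (t * s) / pseries a t)"
    by (simp add: field_simps)
  moreover have "0 \<le> a n * t ^ n / pseries a t * s ^ n" for n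
    using nonneg assms pos by simp
  ultimately have "(\<integral>\<^sup>+n. ennreal (a n * t ^ n / pseries a t * s ^ n) \<partial>count_space UNIV)
      = ennreal (pseries a (t * s) / pseries a t)"
    by (simp add: nn_integral_count_space_nat suminf_ennreal2 sums_iff)
  then show ?thesis
    unfolding nn_integral_measure_pmf pmf_khinchin[OF assms(1-3)]
    using assms by (simp add: ennreal_mult''[symmetric])
qed

lemma nn_integral_iid_sum_power:
  fixes s :: real
  assumes "0 \<le> s"
  shows "(\<integral>\<^sup>+n. ennreal (s ^ n) \<partial>measure_pmf (iid_sum p k))
      = (\<integral>\<^sup>+n. ennreal (s ^ n) \<partial>measure_pmf p) ^ k"
proof (induction k)
  case (Suc k)
  have "(\<integral>\<^sup>+n. ennreal (s ^ n) \<partial>measure_pmf (iid_sum p (Suc k)))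
      = (\<integral>\<^sup>+x. ennreal (s ^ x) * (\<integral>\<^sup>+y. ennreal (s ^ y) \<partial>measure_pmf (iid_sum p k)) \<partial>measure_pmf p)"
    using assms by (simp add: power_add ennreal_mult'' nn_integral_cmult)
  then show ?case
    by (simp add: Suc nn_integral_multc mult.commute)
qed simp

lemma nn_integral_gw_generation_power:
  assumes pgf: "\<And>s. s \<in> {0..1} \<Longrightarrow> (\<integral>\<^sup>+n. ennreal (s ^ n) \<partial>measure_pmf p) = ennreal (f s)"
    and f_range: "\<And>s. s \<in> {0..1} \<Longrightarrow> f s \<in> {0..1}"
    and "s \<in> {0..1}"
  shows "(\<integral>\<^sup>+n. ennreal (s ^ n) \<partial>measure_pmf (gw_generation p m)) = ennreal ((f ^^ m) s)"
  using \<open>s \<in> {0..1}\<close>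
proof (induction m arbitrary: s)
  case (Suc m)
  have "(\<integral>\<^sup>+n. ennreal (s ^ n) \<partial>measure_pmf (gw_generation p (Suc m)))
      = (\<integral>\<^sup>+x. ennreal (f s ^ x) \<partial>measure_pmf (gw_generation p m))"
    using Suc.prems f_range by (simp add: nn_integral_iid_sum_power pgf ennreal_power)
  also have "\<dots> = ennreal ((f ^^ m) (f s))"
    using Suc f_range by blast
  finally show ?case
    by (simp only: funpow_Suc_right comp_apply)
qed simp

lemma pmf_0_eq_nn_integral_power:
  "ennreal (pmf p 0) = (\<integral>\<^sup>+n. ennreal ((0::real) ^ n) \<partial>measure_pmf p)"
proof -
  have "(\<integral>\<^sup>+n. ennreal ((0::real) ^ n) \<partial>measure_pmf p) = (\<integral>\<^sup>+n. indicator {0} n \<partial>measure_pmf p)"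
    by (intro nn_integral_cong) (auto simp: indicator_def)
  then show ?thesis
    by (simp add: emeasure_pmf_single)
qed

lemma funpow_tendsto_least_fixpoint:
  fixes f :: "real \<Rightarrow> real"
  assumes "a \<le> b" and mono: "mono_on {a..b} f" and cont: "continuous_on {a..b} f"
    and f_range: "\<And>x. x \<in> {a..b} \<Longrightarrow> f x \<in> {a..b}"
  obtains q where "(\<lambda>n. (f ^^ n) a) \<longlonglongrightarrow> q" "q \<in> {a..b}" "f q = q"
    "\<And>r. r \<in> {a..b} \<Longrightarrow> f r = r \<Longrightarrow> q \<le> r"
proof -
  define x where "x n = (f ^^ n) a" for n
  have x_range: "x n \<in> {a..b}" for n
    by (induction n) (use \<open>a \<le> b\<close> f_range in \<open>auto simp: x_def\<close>)
  have x_Suc: "x (Suc n) = f (x n)" for n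
    by (simp add: x_def)
  have "x n \<le> x (Suc n)" for n
  proof (induction n)
    case 0
    show ?case using x_range[of 1] by (simp add: x_def)
  next
    case (Suc n)
    then have "f (x n) \<le> f (x (Suc n))"
      by (intro mono_onD[OF mono]) (use x_range in auto)
    then show ?case
      by (metis x_Suc)
  qed
  then have "incseq x" by (rule incseq_SucI)
  moreover have "bdd_above (range x)"
    using x_range by (intro bdd_aboveI[of _ b]) auto
  ultimately obtain q where lim: "x \<longlonglongrightarrow> q"
    using LIMSEQ_incseq_SUP by blast
  have q_range: "q \<in> {a..b}"
    using x_range by (auto intro: LIMSEQ_le_const[OF lim] LIMSEQ_le_const2[OF lim])
  have "(\<lambda>n. f (x n)) \<longlonglongrightarrow> f q"
    using cont q_range x_range lim by (auto intro: continuous_on_tendsto_compose)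
  moreover have "(\<lambda>n. f (x n)) \<longlonglongrightarrow> q"
    using LIMSEQ_Suc[OF lim] by (simp add: x_Suc)
  ultimately have "f q = q"
    using LIMSEQ_unique by blast
  moreover have "q \<le> r" if "r \<in> {a..b}" "f r = r" for r
  proof -
    have "x n \<le> r" for n
    proof (induction n)
      case (Suc n)
      have "f (x n) \<le> f r"
        by (intro mono_onD[OF mono]) (use Suc that x_range in auto)
      then show ?case
        using that by (simp add: x_Suc)
    qed (use that in \<open>simp add: x_def\<close>)
    then show ?thesis
      by (intro LIMSEQ_le_const2[OF lim]) auto
  qed
  ultimately show ?thesis
    using that lim q_range unfolding x_def by blast
qed

lemma extinction_prob_least_fixpoint:
  assumes pgf: "\<And>s. s \<in> {0..1} \<Longrightarrow> (\<integral>\<^sup>+n. ennreal (s ^ n) \<partial>measure_pmf p) = ennreal (f s)"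
    and mono: "mono_on {0..1} f" and cont: "continuous_on {0..1} f" and "0 \<le> f 0"
  shows "extinction_prob p \<in> {0..1}" "f (extinction_prob p) = extinction_prob p"
    "\<And>r. r \<in> {0..1} \<Longrightarrow> f r = r \<Longrightarrow> extinction_prob p \<le> r"
proof -
  have "ennreal (f 1) = 1"
    using pgf[of 1] by simp
  then have "f 1 = 1"
    by (metis ennreal_eq_1 ennreal_neg zero_neq_one)
  then have f_range: "f s \<in> {0..1}" if "s \<in> {0..1}" for s
    using that \<open>0 \<le> f 0\<close> mono_onD[OF mono, of 0 s] mono_onD[OF mono, of s 1] by auto
  obtain q where lim: "(\<lambda>n. (f ^^ n) 0) \<longlonglongrightarrow> q" and q: "q \<in> {0..1}" "f q = q"
    and least: "\<And>r. r \<in> {0..1} \<Longrightarrow> f r = r \<Longrightarrow> q \<le> r"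
    using funpow_tendsto_least_fixpoint[of 0 1 f] mono cont f_range by auto
  have "ennreal (pmf (gw_generation p n) 0) = ennreal ((f ^^ n) 0)" for n
    unfolding pmf_0_eq_nn_integral_power by (rule nn_integral_gw_generation_power) (use pgf f_range in auto)
  moreover have "(f ^^ n) 0 \<in> {0..1}" for n
    by (induction n) (use f_range in auto)
  ultimately have "pmf (gw_generation p n) 0 = (f ^^ n) 0" for n
    by simp
  then have "extinction_prob p = q"
    unfolding extinction_prob_def using lim by (simp add: limI)
  then show "extinction_prob p \<in> {0..1}" "f (extinction_prob p) = extinction_prob p"
    "\<And>r. r \<in> {0..1} \<Longrightarrow> f r = r \<Longrightarrow> extinction_prob p \<le> r"
    using q least by auto
qed

lemma extinction_prob_khinchin:
  assumes "class_K a" "0 \<le> t" "ereal t < conv_radius a"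
  defines "q \<equiv> extinction_prob (khinchin a t)"
  defines "f \<equiv> \<lambda>s. pseries a (t * s) / pseries a t"
  shows "q \<in> {0..1}" "f q = q" "\<And>r. r \<in> {0..1} \<Longrightarrow> f r = r \<Longrightarrow> q \<le> r"
proof -
  have nonneg: "\<And>n. 0 \<le> a n" using assms(1) by (simp add: class_K_def)
  have pos: "0 < pseries a t" using class_K_pseries_pos assms(1-3) by blast
  have radius: "ereal (t * s) < conv_radius a" if "s \<in> {0..1}" for s
    using that assms(2) by (intro le_less_trans[OF _ assms(3)]) (simp add: mult_left_le)
  have "mono_on {0..1} f"
  proof (rule mono_onI)
    fix r s :: real assume "r \<in> {0..1}" "s \<in> {0..1}" "r \<le> s"
    then have "pseries a (t * r) \<le> pseries a (t * s)"
      using assms(2) by (intro pseries_mono nonneg radius mult_left_mono) auto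
    then show "f r \<le> f s"
      unfolding f_def using pos by (simp add: divide_right_mono)
  qed
  moreover have "continuous_on {0..1} f"
  proof (intro continuous_at_imp_continuous_on ballI)
    fix s :: real assume "s \<in> {0..1}"
    then have "isCont (pseries a) (t * s)"
      using radius assms(2) by (intro isCont_pseries) simp
    then have "isCont (\<lambda>s. pseries a (t * s)) s"
      by (rule isCont_o2[rotated]) (intro continuous_intros)
    then show "isCont f s"
      unfolding f_def by (rule isCont_divide[OF _ continuous_const]) (use pos in simp)
  qed
  moreover have "a 0 \<le> pseries a (t * 0)"
    by (rule pseries_ge_nth_0) (use nonneg radius[of 0] in auto)
  then have "0 \<le> f 0"
    unfolding f_def using nonneg[of 0] pos by simp
  moreover have "(\<integral>\<^sup>+n. ennreal (s ^ n) \<partial>measure_pmf (khinchin a t)) = ennreal (f s)"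
    if "s \<in> {0..1}" for s
    unfolding f_def using nn_integral_khinchin_power[OF assms(1-3)] that by simp
  ultimately show "q \<in> {0..1}" "f q = q" "\<And>r. r \<in> {0..1} \<Longrightarrow> f r = r \<Longrightarrow> q \<le> r"
    unfolding q_def by (blast intro: extinction_prob_least_fixpoint)+
qed

section \<open>Coefficients of powers and compositions\<close>

lemma fps_power_nth_cong:
  fixes P Q :: "'a::comm_semiring_1 fps"
  assumes "\<And>j. j \<le> n \<Longrightarrow> P $ j = Q $ j"
  shows "(P ^ i) $ n = (Q ^ i) $ n"
  using assms
proof (induction i arbitrary: n)
  case (Suc i)
  show ?case
    unfolding power_Suc fps_mult_nth by (intro sum.cong refl) (use Suc in auto)
qed simp

lemma fps_power_nth_nonneg:
  fixes P :: "'a::linordered_semidom fps"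
  assumes "\<And>j. j \<le> n \<Longrightarrow> 0 \<le> P $ j"
  shows "0 \<le> (P ^ i) $ n"
  using assms
proof (induction i arbitrary: n)
  case (Suc i)
  show ?case
    unfolding power_Suc fps_mult_nth by (intro sum_nonneg mult_nonneg_nonneg) (use Suc in auto)
qed simp

lemma fps_power_nth_mono:
  fixes P Q :: "'a::linordered_semidom fps"
  assumes "\<And>j. j \<le> n \<Longrightarrow> 0 \<le> P $ j \<and> P $ j \<le> Q $ j"
  shows "(P ^ i) $ n \<le> (Q ^ i) $ n"
  using assms
proof (induction i arbitrary: n)
  case (Suc i)
  show ?case
    unfolding power_Suc fps_mult_nth
  proof (intro sum_mono mult_mono)
    fix j assume "j \<in> {0..n}"
    then have "0 \<le> P $ j" "P $ j \<le> Q $ j"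
      using Suc.prems by auto
    then show "P $ j \<le> Q $ j" "0 \<le> Q $ j"
      by auto
    show "(P ^ i) $ (n - j) \<le> (Q ^ i) $ (n - j)" "0 \<le> (P ^ i) $ (n - j)"
      using Suc by (auto intro!: fps_power_nth_nonneg)
  qed
qed simp

lemma fps_compose_nth_cong:
  fixes P Q :: "'a::comm_semiring_1 fps"
  assumes "\<And>j. j \<le> n \<Longrightarrow> P $ j = Q $ j"
  shows "(F oo P) $ n = (F oo Q) $ n"
  unfolding fps_compose_nth using fps_power_nth_cong[OF assms] by simp

lemma fps_compose_nth_nonneg:
  fixes F P :: "'a::linordered_semidom fps"
  assumes "\<And>j. 0 \<le> F $ j" "\<And>j. j \<le> n \<Longrightarrow> 0 \<le> P $ j"
  shows "0 \<le> (F oo P) $ n"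
  unfolding fps_compose_nth using assms
  by (intro sum_nonneg mult_nonneg_nonneg fps_power_nth_nonneg) auto

lemma fps_compose_nth_mono:
  fixes F P Q :: "'a::linordered_semidom fps"
  assumes "\<And>j. 0 \<le> F $ j" "\<And>j. j \<le> n \<Longrightarrow> 0 \<le> P $ j \<and> P $ j \<le> Q $ j"
  shows "(F oo P) $ n \<le> (F oo Q) $ n"
  unfolding fps_compose_nth using assms
  by (intro sum_mono mult_left_mono fps_power_nth_mono) auto

lemma fps_conv_radius_cutoff [simp]:
  fixes F :: "'a::{banach, real_normed_div_algebra} fps"
  shows "fps_conv_radius (fps_cutoff n F) = \<infinity>"
  using fps_conv_radius_fps_of_poly[of "truncate_fps n F"] by simp

lemma eval_fps_cutoff:
  fixes F :: "'a::{banach, real_normed_div_algebra} fps"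
  shows "eval_fps (fps_cutoff n F) x = (\<Sum>k<n. F $ k * x ^ k)"
proof -
  have "(\<lambda>k. fps_cutoff n F $ k * x ^ k) sums eval_fps (fps_cutoff n F) x"
    by (rule sums_eval_fps) simp
  moreover have "(\<lambda>k. fps_cutoff n F $ k * x ^ k) sums (\<Sum>k<n. fps_cutoff n F $ k * x ^ k)"
    by (rule sums_finite) auto
  ultimately show ?thesis
    using sums_unique2 by force
qed

lemma sums_fps_compose_nonneg:
  fixes P :: "real fps"
  assumes nonneg: "\<And>n. 0 \<le> a n" and "P $ 0 = 0" and P_nonneg: "\<And>k. 0 \<le> P $ k"
    and "0 \<le> x" and x_radius: "ereal x < fps_conv_radius P"
    and "ereal (eval_fps P x) < conv_radius a"
  shows "(\<lambda>m. (Abs_fps a oo P) $ m * x ^ m) sums pseries a (eval_fps P x)"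
proof -
  define y where "y = eval_fps P x"
  have "(\<lambda>n. P $ n * x ^ n) sums y"
    unfolding y_def using x_radius \<open>0 \<le> x\<close> by (intro sums_eval_fps) simp
  from sums_le[OF _ sums_zero this] have "0 \<le> y"
    using P_nonneg \<open>0 \<le> x\<close> by simp
  \<comment> \<open>The double series has non-negative terms, so it may be summed in either order.\<close>
  define b where "b = (\<lambda>(i, m). a i * (P ^ i) $ m * x ^ m)"
  have b_nonneg: "0 \<le> b (i, m)" for i m
    unfolding b_def using nonneg \<open>0 \<le> x\<close> P_nonneg by (simp add: fps_power_nth_nonneg)
  have rows: "((\<lambda>m. b (i, m)) has_sum (a i * y ^ i)) UNIV" for i
  proof -
    have "(\<lambda>m. (P ^ i) $ m * x ^ m) sums eval_fps (P ^ i) x"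
      by (rule sums_eval_fps) (use fps_conv_radius_power[of P i] x_radius \<open>0 \<le> x\<close> in auto)
    moreover have "eval_fps (P ^ i) x = y ^ i"
      unfolding y_def using x_radius \<open>0 \<le> x\<close> by (intro eval_fps_power) simp
    ultimately have "(\<lambda>m. a i * ((P ^ i) $ m * x ^ m)) sums (a i * y ^ i)"
      by (intro sums_mult) simp
    then have "(\<lambda>m. b (i, m)) sums (a i * y ^ i)"
      by (simp add: b_def mult.assoc)
    then show ?thesis
      by (rule sums_nonneg_imp_has_sum) (rule b_nonneg)
  qed
  have total: "((\<lambda>i. a i * y ^ i) has_sum pseries a y) UNIV"
    by (rule sums_nonneg_imp_has_sum) (use pseries_sums[of y a] assms \<open>0 \<le> y\<close> nonneg in \<open>auto simp: y_def\<close>)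
  have "b summable_on (UNIV \<times> UNIV)"
    by (rule summable_on_SigmaI[where g = "\<lambda>i. a i * y ^ i"])
      (use rows total b_nonneg in \<open>auto simp: summable_on_def\<close>)
  then have "(b has_sum pseries a y) (UNIV \<times> UNIV)"
    by (intro has_sum_SigmaI[OF rows total])
  then have swapped: "((\<lambda>(m, i). b (i, m)) has_sum pseries a y) (UNIV \<times> UNIV)"
    using has_sum_swap by blast
  have columns: "((\<lambda>i. b (i, m)) has_sum ((Abs_fps a oo P) $ m * x ^ m)) UNIV" for m
  proof (rule has_sum_finite_neutralI[of "{0..m}"])
    show "b (i, m) = 0" if "i \<in> UNIV - {0..m}" for i
      using that startsby_zero_power_prefix[OF \<open>P $ 0 = 0\<close>, of i] by (auto simp: b_def)
    show "(Abs_fps a oo P) $ m * x ^ m = (\<Sum>i\<in>{0..m}. b (i, m))"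
      by (simp add: b_def fps_compose_nth sum_distrib_right)
  qed auto
  have "((\<lambda>m. (Abs_fps a oo P) $ m * x ^ m) has_sum pseries a y) UNIV"
    by (rule has_sum_SigmaD[OF swapped]) (use columns in simp)
  then show ?thesis
    unfolding y_def by (rule has_sum_imp_sums)
qed

section \<open>Lagrange's equation\<close>

lemma lagrange_equation_iff_compose:
  fixes psi :: "nat \<Rightarrow> real" and H :: "real fps"
  assumes "psi 0 \<noteq> 0" "H $ 0 = 0"
  shows "H = fps_X * (Abs_fps psi oo H) \<longleftrightarrow> (fps_X * inverse (Abs_fps psi)) oo H = fps_X"
proof -
  define B where "B = Abs_fps psi oo H"
  have B_inverse: "B * inverse B = 1"
    unfolding B_def using assms by (intro inverse_mult_eq_1') simp
  have "(fps_X * inverse (Abs_fps psi)) oo H = H * inverse B"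
    using assms by (simp add: B_def fps_compose_mult_distrib fps_inverse_compose)
  moreover have "H = fps_X * B \<longleftrightarrow> H * inverse B = fps_X"
  proof
    assume "H * inverse B = fps_X"
    then have "H * (B * inverse B) = fps_X * B"
      by (metis mult.assoc mult.commute)
    then show "H = fps_X * B"
      using B_inverse by simp
  qed (use B_inverse in \<open>simp add: mult.assoc\<close>)
  ultimately show ?thesis
    unfolding B_def[symmetric] by simp
qed

lemma lagrange_equation_unique_solution:
  fixes psi :: "nat \<Rightarrow> real"
  assumes "psi 0 \<noteq> 0"
  shows "\<exists>!G. G $ 0 = 0 \<and> G = fps_X * (Abs_fps psi oo G)"
proof -
  define F where "F = fps_X * inverse (Abs_fps psi)"
  have F0: "F $ 0 = 0" and F1: "F $ 1 \<noteq> 0"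
    using assms by (simp_all add: F_def)
  have solution_iff: "H = fps_X * (Abs_fps psi oo H) \<longleftrightarrow> F oo H = fps_X" if "H $ 0 = 0" for H
    unfolding F_def using lagrange_equation_iff_compose[of psi H] assms that by blast
  have inv0: "fps_inv F $ 0 = 0"
    by (simp add: fps_inv_def)
  show ?thesis
  proof (intro ex1I conjI)
    show "fps_inv F = fps_X * (Abs_fps psi oo fps_inv F)"
      using solution_iff[OF inv0] fps_inv_right[OF F0 F1] by simp
    fix H assume H: "H $ 0 = 0 \<and> H = fps_X * (Abs_fps psi oo H)"
    then have "F oo H = fps_X"
      using solution_iff by blast
    then have "fps_inv F oo (F oo H) = fps_inv F"
      by simp
    then show "H = fps_inv F"
      using H F0 fps_compose_assoc[of H F "fps_inv F"] fps_inv[OF F0 F1] by simp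
  qed (rule inv0)
qed

lemma lagrange_sol:
  assumes "psi 0 \<noteq> 0"
  shows "lagrange_sol psi $ 0 = 0" "lagrange_sol psi = fps_X * (Abs_fps psi oo lagrange_sol psi)"
  using theI'[OF lagrange_equation_unique_solution[of psi, OF assms]]
  unfolding lagrange_sol_def by blast+

lemma lagrange_sol_nth_Suc:
  assumes "psi 0 \<noteq> 0"
  shows "lagrange_sol psi $ Suc n = (Abs_fps psi oo lagrange_sol psi) $ n"
proof -
  have "lagrange_sol psi $ Suc n = (fps_X * (Abs_fps psi oo lagrange_sol psi)) $ Suc n"
    using arg_cong[OF lagrange_sol(2)[of psi, OF assms], of "\<lambda>G. G $ Suc n"] .
  then show ?thesis
    by (simp only: fps_X_mult_nth) simp
qed

lemma lagrange_sol_nth_nonneg: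
  assumes "\<And>n. 0 \<le> psi n" "psi 0 \<noteq> 0"
  shows "0 \<le> lagrange_sol psi $ n"
proof (induction n rule: less_induct)
  case (less n)
  show ?case
  proof (cases n)
    case (Suc m)
    have "0 \<le> (Abs_fps psi oo lagrange_sol psi) $ m"
      using assms less Suc by (intro fps_compose_nth_nonneg) auto
    then show ?thesis
      using Suc lagrange_sol_nth_Suc[of psi m] assms(2) by simp
  qed (simp add: lagrange_sol(1) assms)
qed

lemma lagrange_sol_nth_Suc_cutoff:
  assumes "psi 0 \<noteq> 0" "j < n"
  shows "lagrange_sol psi $ Suc j = (Abs_fps psi oo fps_cutoff n (lagrange_sol psi)) $ j"
  unfolding lagrange_sol_nth_Suc[of psi, OF assms(1)] using assms(2)
  by (intro fps_compose_nth_cong) simp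

lemma lagrange_sol_nth_Suc_ge_cutoff:
  assumes "\<And>n. 0 \<le> psi n" "psi 0 \<noteq> 0"
  shows "(Abs_fps psi oo fps_cutoff n (lagrange_sol psi)) $ m \<le> lagrange_sol psi $ Suc m"
  unfolding lagrange_sol_nth_Suc[of psi, OF assms(2)] using assms
  by (intro fps_compose_nth_mono) (simp_all add: lagrange_sol_nth_nonneg)

lemma sums_lagrange_sol_cutoff_compose:
  fixes psi :: "nat \<Rightarrow> real"
  assumes "\<And>n. 0 \<le> psi n" "psi 0 \<noteq> 0" "0 \<le> w"
    and "ereal (\<Sum>k<n. lagrange_sol psi $ k * w ^ k) < conv_radius psi"
  shows "(\<lambda>m. (Abs_fps psi oo fps_cutoff n (lagrange_sol psi)) $ m * w ^ m)
      sums pseries psi (\<Sum>k<n. lagrange_sol psi $ k * w ^ k)"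
  using sums_fps_compose_nonneg[of psi "fps_cutoff n (lagrange_sol psi)" w] assms
  by (simp add: eval_fps_cutoff lagrange_sol(1) lagrange_sol_nth_nonneg)

lemma lagrange_partial_sum_Suc_le:
  fixes psi :: "nat \<Rightarrow> real"
  defines "A \<equiv> fps_nth (lagrange_sol psi)"
  assumes nonneg: "\<And>n. 0 \<le> psi n" and "psi 0 \<noteq> 0" "0 \<le> w"
    and "ereal (\<Sum>k<n. A k * w ^ k) < conv_radius psi"
  shows "(\<Sum>k<Suc n. A k * w ^ k) \<le> w * pseries psi (\<Sum>k<n. A k * w ^ k)"
proof -
  define C where "C = Abs_fps psi oo fps_cutoff n (lagrange_sol psi)"
  have sums: "(\<lambda>m. C $ m * w ^ m) sums pseries psi (\<Sum>k<n. A k * w ^ k)"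
    unfolding A_def C_def using assms by (intro sums_lagrange_sol_cutoff_compose) auto
  have "A 0 = 0"
    unfolding A_def using assms by (simp add: lagrange_sol(1))
  moreover have "A (Suc j) * w ^ Suc j = w * (C $ j * w ^ j)" if "j < n" for j
    using lagrange_sol_nth_Suc_cutoff[of psi j n] that assms by (simp add: A_def C_def)
  ultimately have "(\<Sum>k<Suc n. A k * w ^ k) = (\<Sum>j<n. w * (C $ j * w ^ j))"
    unfolding sum.lessThan_Suc_shift by (auto intro!: sum.cong)
  also have "\<dots> = w * (\<Sum>j<n. C $ j * w ^ j)"
    by (simp add: sum_distrib_left)
  also have "\<dots> \<le> w * pseries psi (\<Sum>k<n. A k * w ^ k)"
  proof (intro mult_left_mono \<open>0 \<le> w\<close>)
    have "0 \<le> C $ m * w ^ m" for m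
      unfolding C_def using assms by (simp add: fps_compose_nth_nonneg lagrange_sol_nth_nonneg)
    then show "(\<Sum>j<n. C $ j * w ^ j) \<le> pseries psi (\<Sum>k<n. A k * w ^ k)"
      using sum_le_suminf[OF sums_summable[OF sums]] sums_unique[OF sums] by simp
  qed
  finally show ?thesis .
qed

lemma lagrange_pseries_cutoff_le:
  fixes psi :: "nat \<Rightarrow> real"
  defines "A \<equiv> fps_nth (lagrange_sol psi)"
  assumes nonneg: "\<And>n. 0 \<le> psi n" and "psi 0 \<noteq> 0" "0 \<le> w"
    and "ereal (\<Sum>k<n. A k * w ^ k) < conv_radius psi" and "summable (\<lambda>k. A k * w ^ k)"
  shows "w * pseries psi (\<Sum>k<n. A k * w ^ k) \<le> pseries A w"
proof -
  define C where "C = Abs_fps psi oo fps_cutoff n (lagrange_sol psi)"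
  have "(\<lambda>m. w * (C $ m * w ^ m)) sums (w * pseries psi (\<Sum>k<n. A k * w ^ k))"
    unfolding A_def C_def using assms by (intro sums_mult sums_lagrange_sol_cutoff_compose) auto
  moreover have "(\<lambda>m. A (Suc m) * w ^ Suc m) sums pseries A w"
    using summable_sums[OF \<open>summable (\<lambda>k. A k * w ^ k)\<close>] assms
    by (subst sums_Suc_iff) (simp add: A_def lagrange_sol(1) pseries_def)
  moreover have "w * (C $ m * w ^ m) \<le> A (Suc m) * w ^ Suc m" for m
  proof -
    have "C $ m * w ^ m \<le> A (Suc m) * w ^ m"
      using lagrange_sol_nth_Suc_ge_cutoff[of psi n m] assms
      by (intro mult_right_mono) (simp_all add: C_def A_def)
    from mult_left_mono[OF this \<open>0 \<le> w\<close>] show ?thesis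
      by (simp add: mult_ac)
  qed
  ultimately show ?thesis
    by (rule sums_le[rotated])
qed

lemma lagrange_series_least_fixpoint:
  fixes psi :: "nat \<Rightarrow> real"
  defines "A \<equiv> fps_nth (lagrange_sol psi)"
  assumes nonneg: "\<And>n. 0 \<le> psi n" and "psi 0 \<noteq> 0" "0 \<le> w" "0 \<le> u"
    and u_radius: "ereal u < conv_radius psi" and "w * pseries psi u \<le> u"
  shows "summable (\<lambda>n. A n * w ^ n)" "pseries A w \<in> {0..u}"
    "w * pseries psi (pseries A w) = pseries A w"
proof -
  define s where "s n = (\<Sum>k<n. A k * w ^ k)" for n
  have terms_nonneg: "0 \<le> A n * w ^ n" for n
    unfolding A_def using assms by (simp add: lagrange_sol_nth_nonneg)
  then have s_nonneg: "0 \<le> s n" for n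
    unfolding s_def by (simp add: sum_nonneg)
  have radius: "ereal x < conv_radius psi" if "x \<le> u" for x
    using that by (intro le_less_trans[OF _ u_radius]) simp
  have s_le: "s n \<le> u" for n
  proof (induction n)
    case (Suc n)
    have "s (Suc n) \<le> w * pseries psi (s n)"
      unfolding s_def A_def using assms radius Suc
      by (intro lagrange_partial_sum_Suc_le) (auto simp: s_def A_def)
    also have "\<dots> \<le> w * pseries psi u"
      using Suc s_nonneg assms by (intro mult_left_mono pseries_mono) auto
    finally show ?case
      using assms by simp
  qed (simp add: s_def \<open>0 \<le> u\<close>)
  show summable: "summable (\<lambda>n. A n * w ^ n)"
    using terms_nonneg s_le unfolding s_def by (rule summableI_nonneg_bounded)
  define S where "S = pseries A w"
  have lim: "s \<longlonglongrightarrow> S"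
    unfolding s_def S_def pseries_def by (rule summable_LIMSEQ[OF summable])
  have "S \<in> {0..u}"
    using s_nonneg s_le by (auto intro: LIMSEQ_le_const[OF lim] LIMSEQ_le_const2[OF lim])
  then show "pseries A w \<in> {0..u}"
    by (simp add: S_def)
  then have "isCont (pseries psi) S"
    using radius by (intro isCont_pseries) (simp add: S_def)
  then have lim_image: "(\<lambda>n. w * pseries psi (s n)) \<longlonglongrightarrow> w * pseries psi S"
    by (intro tendsto_mult tendsto_const isCont_tendsto_compose[OF _ lim])
  have "w * pseries psi (s n) \<le> S" for n
    unfolding S_def s_def A_def using assms summable radius s_le
    by (intro lagrange_pseries_cutoff_le) (auto simp: s_def A_def)
  then have "w * pseries psi S \<le> S"
    by (intro LIMSEQ_le_const2[OF lim_image]) auto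
  moreover have "s (Suc n) \<le> w * pseries psi (s n)" for n
    unfolding s_def A_def using assms radius s_le
    by (intro lagrange_partial_sum_Suc_le) (auto simp: s_def A_def)
  then have "S \<le> w * pseries psi S"
    by (intro LIMSEQ_le[OF LIMSEQ_Suc[OF lim] lim_image]) auto
  ultimately show "w * pseries psi (pseries A w) = pseries A w"
    by (simp add: S_def)
qed

lemma lagrange_sol_series_eq_extinction_prob:
  fixes psi :: "nat \<Rightarrow> real"
  defines "A \<equiv> fps_nth (lagrange_sol psi)"
  assumes "class_K psi" "0 < t" "ereal t < conv_radius psi"
  shows "summable (\<lambda>n. A n * (t / pseries psi t) ^ n)"
    "pseries A (t / pseries psi t) = t * extinction_prob (khinchin psi t)"
proof -
  have nonneg: "\<And>n. 0 \<le> psi n" and "psi 0 \<noteq> 0"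
    using assms(2) by (auto simp: class_K_def)
  have pos: "0 < pseries psi t"
    using class_K_pseries_pos assms(2-4) by simp
  define q where "q = extinction_prob (khinchin psi t)"
  define w where "w = t / pseries psi t"
  note q = extinction_prob_khinchin[OF assms(2) less_imp_le[OF assms(3)] assms(4), folded q_def]
  have "ereal (t * q) < conv_radius psi"
    using q(1) assms(3) by (intro le_less_trans[OF _ assms(4)]) (simp add: mult_left_le)
  moreover have "w * pseries psi (t * q) = t * q"
    using q(2) pos by (simp add: w_def field_simps)
  ultimately have g: "summable (\<lambda>n. A n * w ^ n)" "pseries A w \<in> {0..t * q}"
    "w * pseries psi (pseries A w) = pseries A w"
    using lagrange_series_least_fixpoint[of psi w "t * q"] nonneg \<open>psi 0 \<noteq> 0\<close> q(1) assms(3) pos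
    by (simp_all add: A_def w_def)
  have "t * q \<le> t"
    using q(1) assms(3) by (simp add: mult_left_le)
  then have "0 \<le> pseries A w" "pseries A w \<le> t"
    using g(2) unfolding atLeastAtMost_iff by linarith+
  then have "pseries A w / t \<in> {0..1}"
    using assms(3) by simp
  moreover have "pseries psi (t * (pseries A w / t)) / pseries psi t = pseries A w / t"
    using g(3) assms(3) pos by (simp add: w_def field_simps)
  ultimately have "q \<le> pseries A w / t"
    by (rule q(3))
  with g(2) show "pseries A (t / pseries psi t) = t * q"
    using assms(3) by (simp add: w_def field_simps)
  show "summable (\<lambda>n. A n * (t / pseries psi t) ^ n)"
    using g(1) by (simp add: w_def)
qed

theorem theorem6p4:
  fixes psi :: "nat \<Rightarrow> real" and t :: real
  assumes "class_K psi"
    and "0 < t" and "ereal t < conv_radius psi"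
  defines "A \<equiv> fps_nth (lagrange_sol psi)"
  shows "(\<lambda>n. A n * t ^ (n - 1) / pseries psi t ^ n) sums extinction_prob (khinchin psi t)
    \<and> extinction_prob (khinchin psi t) = pseries A (t / pseries psi t) / t"
proof -
  define q where "q = extinction_prob (khinchin psi t)"
  define w where "w = t / pseries psi t"
  note g = lagrange_sol_series_eq_extinction_prob[OF assms(1-3), folded A_def q_def w_def]
  have "A 0 = 0"
    using assms(1) by (simp add: A_def lagrange_sol(1) class_K_def)
  then have "A n * w ^ n / t = A n * t ^ (n - 1) / pseries psi t ^ n" for n
    using assms(2) by (cases n) (simp_all add: w_def power_divide)
  moreover have "(\<lambda>n. A n * w ^ n / t) sums q"
    using sums_divide[OF summable_sums[OF g(1)], of t] g(2) assms(2) by (simp add: pseries_def)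
  ultimately show ?thesis
    using g(2) assms(2) by (simp add: q_def w_def)
qed

end
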